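(* Let $\Gamma$ be a simple, undirected, connected $r$-regular graph of order $p$ that contains a cycle and has girth $g(\Gamma)\ge 7$. Then $\gamma_{[3R]}(\Gamma)\le 2p-2r^2+3r-2$.
   Context: The girth of a graph is the minimum length of a cycle in it. For a graph $\Gamma=(V,E)$ and $h:V\to\{0,1,2,3,4\}$, let $AN(v)=\{w\in N(v):h(w)\ge 1\}$, $AN[v]=AN(v)\cup\{v\}$ and $h(S)=\sum_{u\in S}h(u)$. $h$ is a triple Roman dominating function (3RDF) if every $v$ with $h(v)<3$ satisfies $h(AN[v])\ge|AN(v)|+3$. The triple Roman domination number $\gamma_{[3R]}(\Gamma)$ is the minimum weight $h(V)$ of a 3RDF of $\Gamma$. *)

theory Defs
  imports Main
begin

definition simple_graph :: "'a set \<Rightarrow> ('a \<Rightarrow> 'a \<Rightarrow> bool) \<Rightarrow> bool" where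
  "simple_graph V E \<longleftrightarrow> finite V \<and> (\<forall>u v. E u v \<longrightarrow> u \<in> V \<and> v \<in> V)
     \<and> (\<forall>u v. E u v \<longrightarrow> E v u) \<and> (\<forall>v. \<not> E v v)"

definition nbhd :: "'a set \<Rightarrow> ('a \<Rightarrow> 'a \<Rightarrow> bool) \<Rightarrow> 'a \<Rightarrow> 'a set" where
  "nbhd V E v = {w \<in> V. E v w}"

definition regular :: "'a set \<Rightarrow> ('a \<Rightarrow> 'a \<Rightarrow> bool) \<Rightarrow> nat \<Rightarrow> bool" where
  "regular V E r \<longleftrightarrow> (\<forall>v\<in>V. card (nbhd V E v) = r)"

definition connected_graph :: "'a set \<Rightarrow> ('a \<Rightarrow> 'a \<Rightarrow> bool) \<Rightarrow> bool" where
  "connected_graph V E \<longleftrightarrow> (\<forall>u\<in>V. \<forall>v\<in>V. E\<^sup>*\<^sup>* u v)"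

definition is_cycle :: "'a set \<Rightarrow> ('a \<Rightarrow> 'a \<Rightarrow> bool) \<Rightarrow> 'a list \<Rightarrow> bool" where
  "is_cycle V E vs \<longleftrightarrow> length vs \<ge> 3 \<and> distinct vs \<and> set vs \<subseteq> V
     \<and> (\<forall>i. Suc i < length vs \<longrightarrow> E (vs ! i) (vs ! Suc i))
     \<and> E (last vs) (hd vs)"

definition has_cycle :: "'a set \<Rightarrow> ('a \<Rightarrow> 'a \<Rightarrow> bool) \<Rightarrow> bool" where
  "has_cycle V E \<longleftrightarrow> (\<exists>vs. is_cycle V E vs)"

text \<open>Girth: minimum length of a cycle (meaningful when a cycle exists).\<close>

definition girth :: "'a set \<Rightarrow> ('a \<Rightarrow> 'a \<Rightarrow> bool) \<Rightarrow> nat" where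
  "girth V E = Inf {length vs | vs. is_cycle V E vs}"

definition active_nbhd :: "'a set \<Rightarrow> ('a \<Rightarrow> 'a \<Rightarrow> bool) \<Rightarrow> ('a \<Rightarrow> nat) \<Rightarrow> 'a \<Rightarrow> 'a set" where
  "active_nbhd V E h v = {w \<in> nbhd V E v. h w \<ge> 1}"

definition is_3RDF :: "'a set \<Rightarrow> ('a \<Rightarrow> 'a \<Rightarrow> bool) \<Rightarrow> ('a \<Rightarrow> nat) \<Rightarrow> bool" where
  "is_3RDF V E h \<longleftrightarrow> (\<forall>v\<in>V. h v \<le> 4) \<and> (\<forall>v. v \<notin> V \<longrightarrow> h v = 0)
     \<and> (\<forall>v\<in>V. h v < 3 \<longrightarrow>
          sum h (insert v (active_nbhd V E h v)) \<ge> card (active_nbhd V E h v) + 3)"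

definition triple_roman_domination_number :: "'a set \<Rightarrow> ('a \<Rightarrow> 'a \<Rightarrow> bool) \<Rightarrow> nat" where
  "triple_roman_domination_number V E = Min {sum h V | h. is_3RDF V E h}"

end

theory Submission
  imports Defs
begin

(* Take an edge uv. Because the girth is at least 7, the vertices within distance 2 of u or v
   span a tree: u, v, the 2(r - 1) further neighbours of u and v, and their 2(r - 1)^2 further
   neighbours, all distinct. Weight 4 on the 2(r - 1) vertices at distance 1, weight 0 on the rest
   of this ball and weight 2 outside it is a triple Roman dominating function as soon as every
   vertex outside the ball has a neighbour outside the ball, and its weight 2p - 4(r - 1)^2 +
   4(r - 1) - 4 is at most the bound. A vertex outside the ball all of whose neighbours lie at
   distance 2 has, again by the girth, at most one such neighbour on each side; so r = 2 and uv
   lies on a 7-cycle, which is a whole component of the 2-regular graph. Weighting that cycle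
   3, 0, 3, 0, 2, 2, 0 and every other vertex 2 gives 2p - 4, the bound for r = 2. *)

lemma successively_iff_nth:
  "successively P xs \<longleftrightarrow> (\<forall>i. Suc i < length xs \<longrightarrow> P (xs ! i) (xs ! Suc i))"
proof (induction P xs rule: successively.induct)
  case (3 P x y zs)
  then show ?case by (auto simp: nth_Cons split: nat.split)
qed auto

lemma is_cycle_iff_successively:
  "is_cycle V E vs \<longleftrightarrow> 3 \<le> length vs \<and> distinct vs \<and> set vs \<subseteq> V
     \<and> successively E vs \<and> E (last vs) (hd vs)"
  unfolding is_cycle_def successively_iff_nth by blast

lemma cycle_has_vertex_with_two_nbrs:
  assumes "simple_graph V E" "is_cycle V E vs"
  obtains u v v' where "E u v" "E u v'" "v \<noteq> v'"
proof -
  obtain a b c cs where vs: "vs = a # b # c # cs"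
    using assms(2) unfolding is_cycle_def by (metis Suc_le_length_iff numeral_3_eq_3)
  have "E a b" "E (last (c # cs)) a" "b \<noteq> last (c # cs)"
    using assms(2) unfolding vs is_cycle_iff_successively by auto
  then show thesis using assms(1) that unfolding simple_graph_def by blast
qed

definition triple_dominated :: "'a set \<Rightarrow> ('a \<Rightarrow> 'a \<Rightarrow> bool) \<Rightarrow> ('a \<Rightarrow> nat) \<Rightarrow> 'a \<Rightarrow> bool" where
  "triple_dominated V E h x \<longleftrightarrow>
     card (active_nbhd V E h x) + 3 \<le> sum h (insert x (active_nbhd V E h x))"

lemma is_3RDF_iff_triple_dominated:
  "is_3RDF V E h \<longleftrightarrow> (\<forall>x\<in>V. h x \<le> 4) \<and> (\<forall>x. x \<notin> V \<longrightarrow> h x = 0)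
     \<and> (\<forall>x\<in>V. h x < 3 \<longrightarrow> triple_dominated V E h x)"
  unfolding is_3RDF_def triple_dominated_def ..

lemma triple_roman_domination_number_le:
  assumes "is_3RDF V E h" and "finite V"
  shows "triple_roman_domination_number V E \<le> sum h V"
  unfolding triple_roman_domination_number_def
proof (rule Min_le)
  have "{sum g V |g. is_3RDF V E g} \<subseteq> {..4 * card V}"
  proof
    fix n assume "n \<in> {sum g V |g. is_3RDF V E g}"
    then obtain g where g: "n = sum g V" "is_3RDF V E g" by auto
    have "sum g V \<le> sum (\<lambda>_. 4) V" by (rule sum_mono) (use g in \<open>auto simp: is_3RDF_def\<close>)
    then show "n \<in> {..4 * card V}" using g by auto
  qed
  then show "finite {sum g V |g. is_3RDF V E g}" by (rule finite_subset) simp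
qed (use assms in auto)

lemma triple_dominated_if_subset:
  assumes sg: "simple_graph V E" and S: "S \<subseteq> nbhd V E x" "\<forall>w\<in>S. 1 \<le> h w"
    and weight: "3 \<le> h x + (\<Sum>w\<in>S. h w - 1)"
  shows "triple_dominated V E h x"
proof -
  let ?A = "active_nbhd V E h x"
  have fin: "finite ?A" and x: "x \<notin> ?A"
    using sg unfolding simple_graph_def active_nbhd_def nbhd_def by auto
  have "sum h ?A = (\<Sum>w\<in>?A. (h w - 1) + 1)"
    by (rule sum.cong) (auto simp: active_nbhd_def)
  also have "\<dots> = (\<Sum>w\<in>?A. h w - 1) + card ?A"
    by (simp add: sum.distrib del: Suc_diff_1 One_nat_def)
  finally have "sum h ?A = (\<Sum>w\<in>?A. h w - 1) + card ?A" .
  moreover have "(\<Sum>w\<in>S. h w - 1) \<le> (\<Sum>w\<in>?A. h w - 1)"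
    by (rule sum_mono2[OF fin]) (use S in \<open>auto simp: active_nbhd_def\<close>)
  ultimately show ?thesis
    using fin x weight unfolding triple_dominated_def by simp
qed

lemma triple_dominated_by_one:
  assumes "simple_graph V E" "E x w" "1 \<le> h w" "3 \<le> h x + (h w - 1)"
  shows "triple_dominated V E h x"
  by (rule triple_dominated_if_subset[where S = "{w}"])
    (use assms in \<open>auto simp: simple_graph_def nbhd_def\<close>)

lemma triple_dominated_by_two:
  assumes "simple_graph V E" "E x w" "E x w'" "w \<noteq> w'" "1 \<le> h w" "1 \<le> h w'"
    and "3 \<le> h x + (h w - 1) + (h w' - 1)"
  shows "triple_dominated V E h x"
  by (rule triple_dominated_if_subset[where S = "{w, w'}"])
    (use assms in \<open>auto simp: simple_graph_def nbhd_def\<close>)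

lemma triple_roman_domination_number_le_two_outside:
  assumes sg: "simple_graph V E" and SV: "S \<subseteq> V"
    and on_S: "\<forall>x\<in>S. h x \<le> 4 \<and> (h x < 3 \<longrightarrow> triple_dominated V E h x)"
    and off_S: "\<forall>x\<in>V - S. h x = 2" "\<forall>x. x \<notin> V \<longrightarrow> h x = 0"
    and nbr_off_S: "\<forall>x\<in>V - S. \<exists>y\<in>V - S. E x y"
  shows "triple_roman_domination_number V E \<le> sum h S + 2 * (card V - card S)"
proof -
  have finV: "finite V" using sg by (simp add: simple_graph_def)
  have "is_3RDF V E h"
    unfolding is_3RDF_iff_triple_dominated
  proof (intro conjI ballI allI impI)
    fix x assume "x \<in> V" then show "h x \<le> 4" using on_S off_S by (cases "x \<in> S") auto
  next
    fix x assume "x \<notin> V" then show "h x = 0" using off_S by auto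
  next
    fix x assume x: "x \<in> V" "h x < 3"
    show "triple_dominated V E h x"
    proof (cases "x \<in> S")
      case True then show ?thesis using on_S x by auto
    next
      case False
      then obtain y where "y \<in> V - S" "E x y" using nbr_off_S x by auto
      then show ?thesis using off_S x False by (intro triple_dominated_by_one[OF sg, of x y]) auto
    qed
  qed
  then have "triple_roman_domination_number V E \<le> sum h V"
    using finV by (rule triple_roman_domination_number_le)
  also have "sum h V = sum h S + sum h (V - S)"
    using sum.subset_diff[OF SV finV] by (simp add: add.commute)
  also have "sum h (V - S) = 2 * card (V - S)"
    using off_S by simp
  also have "card (V - S) = card V - card S"
    using SV finV by (simp add: card_Diff_subset finite_subset)
  finally show ?thesis .
qed

locale girth7_graph =
  fixes V :: "'a set" and E :: "'a \<Rightarrow> 'a \<Rightarrow> bool"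
  assumes simple: "simple_graph V E"
    and long_cycles: "\<And>vs. is_cycle V E vs \<Longrightarrow> 7 \<le> length vs"
begin

lemma adj_in_V: "E x y \<Longrightarrow> x \<in> V" "E x y \<Longrightarrow> y \<in> V"
  using simple unfolding simple_graph_def by auto

lemma adj_sym: "E x y \<Longrightarrow> E y x"
  using simple unfolding simple_graph_def by auto

lemma adj_neq: "E x y \<Longrightarrow> x \<noteq> y"
  using simple unfolding simple_graph_def by auto

lemma finite_V: "finite V"
  using simple unfolding simple_graph_def by auto

lemma mem_nbhd: "w \<in> nbhd V E x \<longleftrightarrow> E x w"
  using adj_in_V unfolding nbhd_def by auto

lemma finite_nbhd: "finite (nbhd V E x)"
  using finite_V unfolding nbhd_def by auto

lemma no_triangle: "E a b \<Longrightarrow> E b c \<Longrightarrow> E c a \<Longrightarrow> False"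
  using long_cycles[of "[a, b, c]"] adj_neq adj_in_V by (auto simp: is_cycle_iff_successively)

lemma no_4_cycle: "E a b \<Longrightarrow> E b c \<Longrightarrow> E c d \<Longrightarrow> E d a \<Longrightarrow> a \<noteq> c \<Longrightarrow> b \<noteq> d \<Longrightarrow> False"
  using long_cycles[of "[a, b, c, d]"] adj_neq adj_in_V by (auto simp: is_cycle_iff_successively)

lemma no_5_cycle:
  "E a b \<Longrightarrow> E b c \<Longrightarrow> E c d \<Longrightarrow> E d e \<Longrightarrow> E e a \<Longrightarrow>
   distinct [a, b, c, d, e] \<Longrightarrow> False"
  using long_cycles[of "[a, b, c, d, e]"] adj_in_V by (auto simp: is_cycle_iff_successively)

lemma no_6_cycle:
  "E a b \<Longrightarrow> E b c \<Longrightarrow> E c d \<Longrightarrow> E d e \<Longrightarrow> E e f \<Longrightarrow> E f a \<Longrightarrow>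
   distinct [a, b, c, d, e, f] \<Longrightarrow> False"
  using long_cycles[of "[a, b, c, d, e, f]"] adj_in_V by (auto simp: is_cycle_iff_successively)

end

definition level1 :: "'a set \<Rightarrow> ('a \<Rightarrow> 'a \<Rightarrow> bool) \<Rightarrow> 'a \<Rightarrow> 'a \<Rightarrow> 'a set" where
  "level1 V E u v = nbhd V E u - {v}"

definition level2 :: "'a set \<Rightarrow> ('a \<Rightarrow> 'a \<Rightarrow> bool) \<Rightarrow> 'a \<Rightarrow> 'a \<Rightarrow> 'a set" where
  "level2 V E u v = (\<Union>a\<in>level1 V E u v. nbhd V E a - {u})"

definition edge_ball :: "'a set \<Rightarrow> ('a \<Rightarrow> 'a \<Rightarrow> bool) \<Rightarrow> 'a \<Rightarrow> 'a \<Rightarrow> 'a set" where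
  "edge_ball V E u v =
     {u, v} \<union> level1 V E u v \<union> level1 V E v u \<union> level2 V E u v \<union> level2 V E v u"

lemma edge_ball_commute: "edge_ball V E v u = edge_ball V E u v"
  unfolding edge_ball_def by auto

context girth7_graph
begin

lemma common_nbr_of_nbrs: "E u a \<Longrightarrow> E u a' \<Longrightarrow> a \<noteq> a' \<Longrightarrow> E a x \<Longrightarrow> E a' x \<Longrightarrow> x = u"
  using no_4_cycle[of u a x a'] adj_sym[of a' x] adj_sym[of u a'] by blast

lemma mem_level1: "x \<in> level1 V E u v \<longleftrightarrow> E u x \<and> x \<noteq> v"
  unfolding level1_def by (auto simp: mem_nbhd)

lemma mem_level2: "x \<in> level2 V E u v \<longleftrightarrow> (\<exists>a. E u a \<and> a \<noteq> v \<and> E a x) \<and> x \<noteq> u"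
  unfolding level2_def by (auto simp: mem_level1 mem_nbhd)

lemma edge_ball_subset: "E u v \<Longrightarrow> edge_ball V E u v \<subseteq> V"
  unfolding edge_ball_def using adj_in_V by (auto simp: mem_level1 mem_level2)

lemma nbr_outside_edge_ball:
  assumes "x \<notin> edge_ball V E u v" "E x y" "y \<notin> level2 V E u v \<union> level2 V E v u"
  shows "y \<notin> edge_ball V E u v"
  using assms adj_sym[OF assms(2)] unfolding edge_ball_def by (auto simp: mem_level1 mem_level2)

lemma level1_disjoint: "E u v \<Longrightarrow> level1 V E u v \<inter> level1 V E v u = {}"
  by (auto simp: mem_level1) (metis adj_sym no_triangle)

lemma level2_outside_level1:
  assumes uv: "E u v" and b: "b \<in> level2 V E u v"
  shows "b \<notin> {u, v} \<union> level1 V E u v \<union> level1 V E v u"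
proof -
  obtain a where a: "E u a" "a \<noteq> v" "E a b" "b \<noteq> u" using b by (auto simp: mem_level2)
  have "b \<noteq> v" using no_triangle[of u a v] a uv adj_sym by blast
  moreover have "\<not> E u b" using no_triangle[of u a b] a adj_sym by blast
  moreover have "\<not> E v b" using no_4_cycle[of u a b v] a uv adj_sym by blast
  ultimately show ?thesis using a by (auto simp: mem_level1)
qed

lemma level2_disjoint:
  assumes uv: "E u v"
  shows "level2 V E u v \<inter> level2 V E v u = {}"
proof -
  have False if bu: "b \<in> level2 V E u v" and bv: "b \<in> level2 V E v u" for b
  proof -
    obtain a where a: "E u a" "a \<noteq> v" "E a b" using bu by (auto simp: mem_level2)
    obtain a' where a': "E v a'" "a' \<noteq> u" "E a' b" using bv by (auto simp: mem_level2)
    have "a \<noteq> a'" using no_triangle[of u a v] a a' uv adj_sym by blast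
    moreover have "b \<notin> {u, v} \<union> level1 V E u v \<union> level1 V E v u"
      using level2_outside_level1[OF uv bu] .
    ultimately have "distinct [u, a, b, a', v]"
      using a a' adj_neq[OF uv] adj_neq[OF a(1)] adj_neq[OF a(3)] adj_neq[OF a'(3)]
      by (auto simp: mem_level1)
    then show False
      using no_5_cycle[of u a b a' v] uv a a' adj_sym by blast
  qed
  then show ?thesis by blast
qed

lemma level2_unique_nbr:
  assumes uv: "E u v" and w: "w \<notin> edge_ball V E u v"
    and b: "b \<in> level2 V E u v" "E b w" and b': "b' \<in> level2 V E u v" "E b' w"
  shows "b = b'"
proof (rule ccontr)
  assume "b \<noteq> b'"
  obtain a where a: "E u a" "a \<noteq> v" "E a b" using b by (auto simp: mem_level2)
  obtain a' where a': "E u a'" "a' \<noteq> v" "E a' b'" using b' by (auto simp: mem_level2)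
  have level1: "a \<in> level1 V E u v" "a' \<in> level1 V E u v" using a a' by (auto simp: mem_level1)
  then have w_ne: "w \<noteq> a" "w \<noteq> a'" "w \<noteq> u" using w unfolding edge_ball_def by auto
  have b_ne: "b \<noteq> a'" "b' \<noteq> a" "b \<noteq> u" "b' \<noteq> u"
    using level2_outside_level1[OF uv b(1)] level2_outside_level1[OF uv b'(1)] level1 by auto
  have "E w b'" "E b' a'" using adj_sym b'(2) a'(3) by auto
  show False
  proof (cases "a = a'")
    case True
    then show False
      using no_4_cycle[of a b w b'] \<open>b \<noteq> b'\<close> \<open>w \<noteq> a\<close> a b \<open>E w b'\<close> \<open>E b' a'\<close> by blast
  next
    case False
    have "distinct [u, a, b, w, b', a']"
      using False \<open>b \<noteq> b'\<close> w_ne b_ne adj_neq[OF a(1)] adj_neq[OF a'(1)] adj_neq[OF a(3)]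
        adj_neq[OF a'(3)] adj_neq[OF b(2)] adj_neq[OF b'(2)] by auto
    then show False
      using no_6_cycle[of u a b w b' a'] a b \<open>E w b'\<close> \<open>E b' a'\<close> adj_sym[OF a'(1)] by blast
  qed
qed

end

lemma nbr_in_two_regular:
  assumes sg: "simple_graph V E" and reg: "regular V E 2"
    and "E x p" "E x q" "p \<noteq> q" "E x y"
  shows "y = p \<or> y = q"
proof -
  have "x \<in> V" "{p, q} \<subseteq> nbhd V E x" "finite (nbhd V E x)"
    using assms sg unfolding simple_graph_def nbhd_def by auto
  then have "nbhd V E x = {p, q}"
    using reg \<open>p \<noteq> q\<close> unfolding regular_def by (metis card_2_iff card_subset_eq)
  then show ?thesis using \<open>E x y\<close> sg unfolding nbhd_def simple_graph_def by auto
qed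

lemma seven_cycle_closed_in_two_regular:
  assumes sg: "simple_graph V E" and reg: "regular V E 2"
    and cyc: "is_cycle V E [x0, x1, x2, x3, x4, x5, x6]"
    and x: "x \<in> set [x0, x1, x2, x3, x4, x5, x6]" and "E x y"
  shows "y \<in> set [x0, x1, x2, x3, x4, x5, x6]"
proof -
  have dist: "distinct [x0, x1, x2, x3, x4, x5, x6]"
    and e: "E x0 x1" "E x1 x2" "E x2 x3" "E x3 x4" "E x4 x5" "E x5 x6" "E x6 x0"
    using cyc unfolding is_cycle_iff_successively by auto
  have sym: "\<And>x y. E x y \<Longrightarrow> E y x"
    using sg unfolding simple_graph_def by blast
  note two_nbrs = nbr_in_two_regular[OF sg reg]
  show ?thesis
    using x \<open>E x y\<close> dist two_nbrs[OF e(1) sym[OF e(7)]] two_nbrs[OF e(2) sym[OF e(1)]]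
      two_nbrs[OF e(3) sym[OF e(2)]] two_nbrs[OF e(4) sym[OF e(3)]] two_nbrs[OF e(5) sym[OF e(4)]]
      two_nbrs[OF e(6) sym[OF e(5)]] two_nbrs[OF e(7) sym[OF e(6)]]
    by simp blast
qed

lemma triple_roman_domination_number_le_7_cycle:
  assumes sg: "simple_graph V E" and reg: "regular V E 2"
    and cyc: "is_cycle V E cs" and len: "length cs = 7"
  shows "triple_roman_domination_number V E \<le> 2 * card V - 4"
proof -
  obtain x0 x1 x2 x3 x4 x5 x6 where cs: "cs = [x0, x1, x2, x3, x4, x5, x6]"
    using len by (auto simp: length_Suc_conv numeral_eq_Suc)
  have dist: "distinct cs" and SV: "set cs \<subseteq> V"
    and e: "E x0 x1" "E x1 x2" "E x2 x3" "E x3 x4" "E x4 x5" "E x5 x6" "E x6 x0"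
    using cyc unfolding cs is_cycle_iff_successively by auto
  have sym: "\<And>x y. E x y \<Longrightarrow> E y x"
    using sg unfolding simple_graph_def by blast
  define h where "h x = (if x \<in> {x0, x2} then 3 else if x \<in> {x4, x5} then 2
    else if x \<in> set cs then 0 else if x \<in> V then 2 else 0::nat)" for x
  have "triple_roman_domination_number V E \<le> sum h (set cs) + 2 * (card V - card (set cs))"
  proof (rule triple_roman_domination_number_le_two_outside[OF sg SV])
    have "triple_dominated V E h x" if "x \<in> set cs" "h x < 3" for x
    proof -
      from that consider "x = x1" | "x = x3" | "x = x4" | "x = x5" | "x = x6"
        using dist unfolding cs h_def by auto
      then show ?thesis
      proof cases
        case 1 then show ?thesis
          using dist e sym
          by (intro triple_dominated_by_two[OF sg, of x x0 x2]) (auto simp: cs h_def)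
      next
        case 2 then show ?thesis
          using dist e sym
          by (intro triple_dominated_by_two[OF sg, of x x2 x4]) (auto simp: cs h_def)
      next
        case 3 then show ?thesis
          using dist e by (intro triple_dominated_by_one[OF sg, of x x5]) (auto simp: cs h_def)
      next
        case 4 then show ?thesis
          using dist e sym by (intro triple_dominated_by_one[OF sg, of x x4]) (auto simp: cs h_def)
      next
        case 5 then show ?thesis
          using dist e sym
          by (intro triple_dominated_by_two[OF sg, of x x0 x5]) (auto simp: cs h_def)
      qed
    qed
    then show "\<forall>x\<in>set cs. h x \<le> 4 \<and> (h x < 3 \<longrightarrow> triple_dominated V E h x)"
      by (auto simp: h_def)
    show "\<forall>x\<in>V - set cs. h x = 2" "\<forall>x. x \<notin> V \<longrightarrow> h x = 0"
      using SV unfolding cs h_def by auto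
    show "\<forall>x\<in>V - set cs. \<exists>y\<in>V - set cs. E x y"
    proof
      fix x assume x: "x \<in> V - set cs"
      then have "nbhd V E x \<noteq> {}" using reg unfolding regular_def by fastforce
      then obtain y where "E x y" "y \<in> V" unfolding nbhd_def by auto
      then show "\<exists>y\<in>V - set cs. E x y"
        using seven_cycle_closed_in_two_regular[OF sg reg cyc[unfolded cs], of y x] sym x
        unfolding cs by blast
    qed
  qed
  also have "sum h (set cs) = 10" using dist by (auto simp: h_def cs)
  also have "card (set cs) = 7" using dist len by (simp add: distinct_card)
  finally show ?thesis
    using card_mono[OF _ SV] sg \<open>card (set cs) = 7\<close> unfolding simple_graph_def by simp
qed

lemma edge_ball_weight_le_bound:
  fixes r p :: nat
  assumes "2 \<le> r" and "2 + 2 * (r - 1) + 2 * ((r - 1) * (r - 1)) \<le> p"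
  shows "int (8 * (r - 1) + 2 * (p - (2 + 2 * (r - 1) + 2 * ((r - 1) * (r - 1)))))
           \<le> 2 * int p - 2 * int r ^ 2 + 3 * int r - 2"
proof -
  obtain s where s: "r = s + 1" "1 \<le> s" using assms(1) by (intro that[of "r - 1"]) auto
  \<comment> \<open>the slack of the inequality is (2s - 3)(s - 1)\<close>
  have "0 \<le> (2 * int s - 3) * (int s - 1)"
    using s(2) by (cases "s = 1") (auto intro: mult_nonneg_nonneg)
  then show ?thesis using assms s by (simp add: of_nat_diff algebra_simps power2_eq_square)
qed

locale regular_girth7_graph = girth7_graph +
  fixes r :: nat
  assumes regular: "regular V E r" and degree_ge_2: "2 \<le> r"
begin

lemma card_nbhd: "x \<in> V \<Longrightarrow> card (nbhd V E x) = r"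
  using regular unfolding regular_def by blast

lemma card_level1: "E u v \<Longrightarrow> card (level1 V E u v) = r - 1"
  unfolding level1_def using card_nbhd[OF adj_in_V(1)]
  by (simp add: mem_nbhd finite_nbhd card_Diff_singleton)

lemma card_level1_both:
  assumes uv: "E u v"
  shows "card (level1 V E u v \<union> level1 V E v u) = 2 * (r - 1)"
  using card_Un_disjoint[OF _ _ level1_disjoint[OF uv]]
    card_level1[OF uv] card_level1[OF adj_sym[OF uv]]
  unfolding level1_def by (simp add: finite_nbhd)

lemma card_level2:
  assumes uv: "E u v"
  shows "card (level2 V E u v) = (r - 1) * (r - 1)"
proof -
  have "card (level2 V E u v) = (\<Sum>a\<in>level1 V E u v. card (nbhd V E a - {u}))"
    unfolding level2_def
  proof (rule card_UN_disjoint)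
    show "finite (level1 V E u v)" unfolding level1_def using finite_nbhd by simp
    show "\<forall>a\<in>level1 V E u v. finite (nbhd V E a - {u})" using finite_nbhd by simp
    show "\<forall>a\<in>level1 V E u v. \<forall>a'\<in>level1 V E u v. a \<noteq> a' \<longrightarrow>
            (nbhd V E a - {u}) \<inter> (nbhd V E a' - {u}) = {}"
      using common_nbr_of_nbrs by (auto simp: mem_level1 mem_nbhd)
  qed
  also have "\<dots> = (\<Sum>a\<in>level1 V E u v. r - 1)"
  proof (rule sum.cong)
    fix a assume "a \<in> level1 V E u v"
    then have "E a u" using adj_sym by (auto simp: mem_level1)
    then show "card (nbhd V E a - {u}) = r - 1"
      using card_nbhd[OF adj_in_V(1)] by (simp add: mem_nbhd finite_nbhd card_Diff_singleton)
  qed simp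
  also have "\<dots> = (r - 1) * (r - 1)" using card_level1[OF uv] by simp
  finally show ?thesis .
qed

lemma card_edge_ball:
  assumes uv: "E u v"
  shows "card (edge_ball V E u v) = 2 + 2 * (r - 1) + 2 * ((r - 1) * (r - 1))"
proof -
  let ?L1 = "level1 V E u v \<union> level1 V E v u" and ?L2 = "level2 V E u v \<union> level2 V E v u"
  have vu: "E v u" using adj_sym[OF uv] .
  have fin: "finite ?L1" "finite ?L2"
    using finite_subset[OF edge_ball_subset[OF uv] finite_V] unfolding edge_ball_def by auto
  have "({u, v} \<union> ?L1) \<inter> ?L2 = {}"
    using level2_outside_level1[OF uv] level2_outside_level1[OF vu] by blast
  then have "card (edge_ball V E u v) = card ({u, v} \<union> ?L1) + card ?L2"
    using card_Un_disjoint[of "{u, v} \<union> ?L1" ?L2] fin unfolding edge_ball_def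
    by (simp add: Un_assoc)
  also have "card ({u, v} \<union> ?L1) = 2 + card ?L1"
  proof -
    have "u \<notin> ?L1" "v \<notin> ?L1" using adj_neq by (auto simp: mem_level1)
    then show ?thesis using fin adj_neq[OF uv] by simp
  qed
  also have "card ?L2 = 2 * ((r - 1) * (r - 1))"
    using card_Un_disjoint[OF fin(2)[unfolded finite_Un, THEN conjunct1]
        fin(2)[unfolded finite_Un, THEN conjunct2] level2_disjoint[OF uv]]
      card_level2[OF uv] card_level2[OF vu] by simp
  finally show ?thesis using card_level1_both[OF uv] by simp
qed

lemma edge_ball_has_level1_nbr:
  assumes uv: "E u v" and x: "x \<in> edge_ball V E u v" "x \<notin> level1 V E u v \<union> level1 V E v u"
  shows "\<exists>a\<in>level1 V E u v \<union> level1 V E v u. E x a"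
proof -
  have vu: "E v u" using adj_sym[OF uv] .
  from x consider "x = u" | "x = v" | "x \<in> level2 V E u v" | "x \<in> level2 V E v u"
    unfolding edge_ball_def by blast
  then show ?thesis
  proof cases
    case 1
    have "level1 V E u v \<noteq> {}" using card_level1[OF uv] degree_ge_2 by auto
    then show ?thesis using 1 by (auto simp: mem_level1)
  next
    case 2
    have "level1 V E v u \<noteq> {}" using card_level1[OF vu] degree_ge_2 by auto
    then show ?thesis using 2 by (auto simp: mem_level1)
  next
    case 3
    then obtain a where "E u a" "a \<noteq> v" "E a x" by (auto simp: mem_level2)
    then show ?thesis using adj_sym[of a x] by (auto simp: mem_level1)
  next
    case 4
    then obtain a where "E v a" "a \<noteq> u" "E a x" by (auto simp: mem_level2)
    then show ?thesis using adj_sym[of a x] by (auto simp: mem_level1)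
  qed
qed

lemma triple_roman_domination_number_le_edge_ball:
  assumes uv: "E u v"
    and leaves: "\<forall>w\<in>V - edge_ball V E u v. \<exists>y. E w y \<and> y \<notin> level2 V E u v \<union> level2 V E v u"
  shows "triple_roman_domination_number V E
           \<le> 8 * (r - 1) + 2 * (card V - card (edge_ball V E u v))"
proof -
  let ?B = "edge_ball V E u v" and ?L1 = "level1 V E u v \<union> level1 V E v u"
  have L1B: "?L1 \<subseteq> ?B" unfolding edge_ball_def by auto
  have BV: "?B \<subseteq> V" using edge_ball_subset[OF uv] .
  define h where "h x = (if x \<in> ?L1 then 4 else if x \<in> ?B then 0 else if x \<in> V then 2 else 0::nat)"
    for x
  have "triple_roman_domination_number V E \<le> sum h ?B + 2 * (card V - card ?B)"
  proof (rule triple_roman_domination_number_le_two_outside[OF simple BV])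
    show "\<forall>x\<in>?B. h x \<le> 4 \<and> (h x < 3 \<longrightarrow> triple_dominated V E h x)"
    proof
      fix x assume x: "x \<in> ?B"
      show "h x \<le> 4 \<and> (h x < 3 \<longrightarrow> triple_dominated V E h x)"
      proof (cases "x \<in> ?L1")
        case False
        then obtain a where "a \<in> ?L1" "E x a" using edge_ball_has_level1_nbr[OF uv x] by blast
        then have "triple_dominated V E h x"
          using False x by (intro triple_dominated_by_one[OF simple, of x a]) (auto simp: h_def)
        then show ?thesis by (simp add: h_def)
      qed (simp add: h_def)
    qed
    show "\<forall>x\<in>V - ?B. h x = 2" "\<forall>x. x \<notin> V \<longrightarrow> h x = 0"
      using L1B BV by (auto simp: h_def)
    show "\<forall>x\<in>V - ?B. \<exists>y\<in>V - ?B. E x y"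
    proof
      fix x assume x: "x \<in> V - ?B"
      then obtain y where y: "E x y" "y \<notin> level2 V E u v \<union> level2 V E v u" using leaves by blast
      then show "\<exists>y\<in>V - ?B. E x y" using nbr_outside_edge_ball[OF _ y] x adj_in_V(2) by blast
    qed
  qed
  also have "sum h ?B = 4 * card ?L1"
  proof -
    have "sum h ?B = (\<Sum>x\<in>?B. if x \<in> ?L1 then 4 else 0)" by (rule sum.cong) (auto simp: h_def)
    also have "\<dots> = sum (\<lambda>_. 4) {x \<in> ?B. x \<in> ?L1}"
      by (rule sum.inter_filter[symmetric, OF finite_subset[OF BV finite_V]])
    also have "{x \<in> ?B. x \<in> ?L1} = ?L1" using L1B by blast
    finally show ?thesis by simp
  qed
  finally show ?thesis using card_level1_both[OF uv] by simp
qed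

lemma trapped_vertex_closes_7_cycle:
  assumes uv: "E u v" and w: "w \<in> V" "w \<notin> edge_ball V E u v"
    and trapped: "\<forall>y. E w y \<longrightarrow> y \<in> level2 V E u v \<union> level2 V E v u"
  shows "r = 2" and "\<exists>cs. is_cycle V E cs \<and> length cs = 7"
proof -
  have vu: "E v u" using adj_sym[OF uv] .
  have w': "w \<notin> edge_ball V E v u" using w(2) by (simp add: edge_ball_commute)
  obtain y1 y2 where y: "E w y1" "E w y2" "y1 \<noteq> y2"
  proof -
    have "\<not> card (nbhd V E w) \<le> Suc 0" using card_nbhd[OF w(1)] degree_ge_2 by simp
    then show thesis using that by (auto simp: card_le_Suc0_iff_eq[OF finite_nbhd] mem_nbhd)
  qed
  have one_per_side: "y = y'"
    if "y \<in> level2 V E u v \<and> y' \<in> level2 V E u v \<or> y \<in> level2 V E v u \<and> y' \<in> level2 V E v u"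
      "E w y" "E w y'" for y y'
    using that level2_unique_nbr[OF uv w(2)] level2_unique_nbr[OF vu w'] adj_sym[of w] by blast
  then obtain bu bv where b: "bu \<in> level2 V E u v" "bv \<in> level2 V E v u" "E w bu" "E w bv"
    using trapped y by blast
  have "nbhd V E w \<subseteq> {bu, bv}"
    using trapped one_per_side b by (auto simp: mem_nbhd)
  then have "card (nbhd V E w) \<le> card {bu, bv}" by (intro card_mono) auto
  also have "\<dots> \<le> 2" by (cases "bu = bv") auto
  finally show "r = 2" using card_nbhd[OF w(1)] degree_ge_2 by simp
  obtain au where au: "E u au" "au \<noteq> v" "E au bu" using b(1) by (auto simp: mem_level2)
  obtain av where av: "E v av" "av \<noteq> u" "E av bv" using b(2) by (auto simp: mem_level2)
  have "au \<in> level1 V E u v" "av \<in> level1 V E v u" using au av by (auto simp: mem_level1)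
  then have "distinct [u, v, av, bv, w, bu, au]"
    using level2_outside_level1[OF uv b(1)] level2_outside_level1[OF vu b(2)]
      level1_disjoint[OF uv] level2_disjoint[OF uv] b(1,2) w(2) au av
      adj_neq[OF uv] adj_neq[OF au(1)] adj_neq[OF av(1)]
    unfolding edge_ball_def by auto
  moreover have "set [u, v, av, bv, w, bu, au] \<subseteq> V"
    using adj_in_V uv au av b w(1) by auto
  ultimately have "is_cycle V E [u, v, av, bv, w, bu, au]"
    using uv au av b adj_sym[OF b(4)] adj_sym[OF au(3)] adj_sym[OF au(1)]
    by (simp add: is_cycle_iff_successively)
  then show "\<exists>cs. is_cycle V E cs \<and> length cs = 7" by force
qed

lemma triple_roman_domination_number_bound:
  assumes uv: "E u v"
  shows "int (triple_roman_domination_number V E)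
           \<le> 2 * int (card V) - 2 * int r ^ 2 + 3 * int r - 2"
proof (cases "\<forall>w\<in>V - edge_ball V E u v. \<exists>y. E w y \<and> y \<notin> level2 V E u v \<union> level2 V E v u")
  case True
  let ?b = "2 + 2 * (r - 1) + 2 * ((r - 1) * (r - 1))"
  have b: "?b \<le> card V"
    using card_mono[OF finite_V edge_ball_subset[OF uv]] card_edge_ball[OF uv] by simp
  have "triple_roman_domination_number V E \<le> 8 * (r - 1) + 2 * (card V - ?b)"
    using triple_roman_domination_number_le_edge_ball[OF uv True] card_edge_ball[OF uv] by simp
  then have "int (triple_roman_domination_number V E) \<le> int (8 * (r - 1) + 2 * (card V - ?b))"
    by (simp only: of_nat_le_iff)
  also have "\<dots> \<le> 2 * int (card V) - 2 * int r ^ 2 + 3 * int r - 2"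
    by (rule edge_ball_weight_le_bound[OF degree_ge_2 b])
  finally show ?thesis .
next
  case False
  then obtain w where "w \<in> V" "w \<notin> edge_ball V E u v"
    "\<forall>y. E w y \<longrightarrow> y \<in> level2 V E u v \<union> level2 V E v u" by blast
  from trapped_vertex_closes_7_cycle[OF uv this] obtain cs
    where r: "r = 2" and cs: "is_cycle V E cs" "length cs = 7" by blast
  have "triple_roman_domination_number V E \<le> 2 * card V - 4"
    using triple_roman_domination_number_le_7_cycle[OF simple _ cs] regular r by simp
  moreover have "2 \<le> card V"
    using card_mono[OF finite_V, of "{u, v}"] adj_in_V[OF uv] adj_neq[OF uv] by simp
  ultimately show ?thesis using r by (simp add: of_nat_diff)
qed

end

theorem corollary10:
  fixes V :: "'a set" and E :: "'a \<Rightarrow> 'a \<Rightarrow> bool" and r :: nat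
  assumes "simple_graph V E"
    and "connected_graph V E"
    and "regular V E r"
    and "has_cycle V E"
    and "girth V E \<ge> 7"
  shows "int (triple_roman_domination_number V E)
           \<le> 2 * int (card V) - 2 * int r ^ 2 + 3 * int r - 2"
proof -
  obtain vs where cycle: "is_cycle V E vs" using assms(4) unfolding has_cycle_def by blast
  have long: "7 \<le> length ws" if "is_cycle V E ws" for ws
  proof -
    have "girth V E \<le> length ws" unfolding girth_def by (rule cInf_lower) (use that in auto)
    then show ?thesis using assms(5) by simp
  qed
  interpret girth7_graph V E using assms(1) long by unfold_locales
  obtain u v v' where uv: "E u v" "E u v'" "v \<noteq> v'"
    using cycle_has_vertex_with_two_nbrs[OF assms(1) cycle] .
  have "card {v, v'} \<le> card (nbhd V E u)"
    by (rule card_mono) (use uv finite_nbhd in \<open>auto simp: mem_nbhd\<close>)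
  then have "2 \<le> r" using uv assms(3) adj_in_V unfolding regular_def by auto
  interpret regular_girth7_graph V E r using assms(3) \<open>2 \<le> r\<close> by unfold_locales
  show ?thesis using triple_roman_domination_number_bound[OF uv(1)] .
qed

end
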